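(* Let $V$ be a finite set and $\mathcal{F}\subseteq 2^V$ a minimal hereditary family with $\delta(\mathcal{F})\ge 12$. Then every $4$-element set $Q\in\mathcal{F}$ contains at most three mini-weight vertices.
   Context: A family $\mathcal{F}\subseteq 2^V$ is hereditary if $F'\subseteq F\in\mathcal{F}$ implies $F'\in\mathcal{F}$. For $x\in V$: $\mathcal{F}(x)=\{F\setminus\{x\}: x\in F\in\mathcal{F}\}$, $d_{\mathcal{F}}(x)=|\mathcal{F}(x)|$, $\delta(\mathcal{F})=\min_{x\in V}d_{\mathcal{F}}(x)$. A set $F\in\mathcal{F}$ is maximal if no other member strictly contains it; a hereditary $\mathcal{F}$ with $\delta(\mathcal{F})\ge 12$ is minimal if $\delta(\mathcal{F}\setminus\{F\})\le 11$ for every maximal $F\in\mathcal{F}$. $f_i(x)$ denotes the number of $i$-element sets in $\mathcal{F}(x)$. A vertex $x$ is mini-weight if $f_1(x)=4$, $f_2(x)=5$, $f_3(x)=2$. *)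

theory Defs
  imports Main
begin

definition hereditary :: "'a set set \<Rightarrow> bool" where
  "hereditary \<F> \<longleftrightarrow> (\<forall>F F'. F \<in> \<F> \<and> F' \<subseteq> F \<longrightarrow> F' \<in> \<F>)"

definition link :: "'a set set \<Rightarrow> 'a \<Rightarrow> 'a set set" where
  "link \<F> x = {F - {x} | F. x \<in> F \<and> F \<in> \<F>}"

definition deg :: "'a set set \<Rightarrow> 'a \<Rightarrow> nat" where
  "deg \<F> x = card (link \<F> x)"

definition min_deg :: "'a set \<Rightarrow> 'a set set \<Rightarrow> nat" where
  "min_deg V \<F> = Min ((\<lambda>x. deg \<F> x) ` V)"

definition maximal_set :: "'a set set \<Rightarrow> 'a set \<Rightarrow> bool" where
  "maximal_set \<F> F \<longleftrightarrow> F \<in> \<F> \<and> (\<forall>G\<in>\<F>. F \<subseteq> G \<longrightarrow> G = F)"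

definition minimal_family :: "'a set \<Rightarrow> 'a set set \<Rightarrow> bool" where
  "minimal_family V \<F> \<longleftrightarrow> hereditary \<F> \<and> min_deg V \<F> \<ge> 12 \<and>
     (\<forall>F. maximal_set \<F> F \<longrightarrow> min_deg V (\<F> - {F}) \<le> 11)"

definition fcount :: "'a set set \<Rightarrow> 'a \<Rightarrow> nat \<Rightarrow> nat" where
  "fcount \<F> x i = card {S \<in> link \<F> x. card S = i}"

definition mini_weight :: "'a set set \<Rightarrow> 'a \<Rightarrow> bool" where
  "mini_weight \<F> x \<longleftrightarrow> fcount \<F> x 1 = 4 \<and> fcount \<F> x 2 = 5 \<and> fcount \<F> x 3 = 2"

end

theory Submission
  imports Defs
begin

text \<open>By heredity, \<open>f\<^sub>1(x)\<close> counts the neighbours of \<open>x\<close>,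
and \<open>f\<^sub>3(x)\<close> counts the 4-sets of \<open>\<F>\<close> through \<open>x\<close>. So for a mini-weight \<open>x \<in> Q\<close> there is exactly
one further 4-set \<open>W\<close> through \<open>x\<close>, and \<open>(W \<union> Q) - {x}\<close> lies in the 4 neighbours of \<open>x\<close>, whence
\<open>|W \<inter> Q| \<ge> 3\<close>. If all of \<open>Q\<close> were mini-weight, take such a \<open>W\<^sub>a\<close>, a vertex \<open>c \<in> Q - W\<^sub>a\<close> and
its \<open>W\<^sub>c\<close>: the 3-sets \<open>W\<^sub>a \<inter> Q\<close> and \<open>W\<^sub>c \<inter> Q\<close> meet in some \<open>p\<close>, and \<open>Q\<close>, \<open>W\<^sub>a\<close>, \<open>W\<^sub>c\<close> are three
distinct 4-sets through \<open>p\<close>, contradicting \<open>f\<^sub>3(p) = 2\<close>.\<close>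

lemma fcount_Suc_eq_card_sets_through:
  "fcount \<F> x (Suc k) = card {A \<in> \<F>. x \<in> A \<and> card A = Suc (Suc k)}"
proof -
  let ?T = "{A \<in> \<F>. x \<in> A \<and> card A = Suc (Suc k)}"
  have "{S \<in> link \<F> x. card S = Suc k} = (\<lambda>A. A - {x}) ` ?T"
  proof (intro equalityI subsetI)
    fix S assume "S \<in> {S \<in> link \<F> x. card S = Suc k}"
    then obtain A where A: "S = A - {x}" "x \<in> A" "A \<in> \<F>" and cS: "card S = Suc k"
      unfolding link_def by blast
    have "finite S" using cS by (intro card_ge_0_finite) simp
    moreover have "x \<notin> S" using A(1) by blast
    ultimately have "card (insert x S) = Suc (Suc k)" using cS by simp
    moreover have "insert x S = A" using A(1,2) by blast
    ultimately show "S \<in> (\<lambda>A. A - {x}) ` ?T" using A by blast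
  next
    fix S assume "S \<in> (\<lambda>A. A - {x}) ` ?T"
    then obtain A where A: "S = A - {x}" "x \<in> A" "A \<in> \<F>" "card A = Suc (Suc k)" by blast
    then have "card S = Suc k" by (simp add: card_Diff_singleton_if)
    with A show "S \<in> {S \<in> link \<F> x. card S = Suc k}" unfolding link_def by blast
  qed
  moreover have "inj_on (\<lambda>A. A - {x}) ?T"
    by (rule inj_onI) (metis (no_types, lifting) insert_Diff mem_Collect_eq)
  ultimately show ?thesis unfolding fcount_def by (simp add: card_image)
qed

definition nbhd :: "'a set set \<Rightarrow> 'a \<Rightarrow> 'a set" where
  "nbhd \<F> x = \<Union>{A \<in> \<F>. x \<in> A} - {x}"

lemma fcount_one_eq_card_nbhd:
  assumes "hereditary \<F>"
  shows "fcount \<F> x 1 = card (nbhd \<F> x)"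
proof -
  have "{S \<in> link \<F> x. card S = 1} = (\<lambda>t. {t}) ` nbhd \<F> x"
  proof (intro equalityI subsetI)
    fix S assume "S \<in> {S \<in> link \<F> x. card S = 1}"
    then obtain A where A: "S = A - {x}" "x \<in> A" "A \<in> \<F>" and "card S = 1"
      unfolding link_def by blast
    then obtain t where "S = {t}" using card_1_singletonE by blast
    then have "t \<in> nbhd \<F> x" using A unfolding nbhd_def by blast
    then show "S \<in> (\<lambda>t. {t}) ` nbhd \<F> x" using \<open>S = {t}\<close> by blast
  next
    fix S assume "S \<in> (\<lambda>t. {t}) ` nbhd \<F> x"
    then obtain t where "S = {t}" "t \<in> nbhd \<F> x" by blast
    then obtain A where A: "S = {t}" "A \<in> \<F>" "x \<in> A" "t \<in> A" "t \<noteq> x"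
      unfolding nbhd_def by auto
    then have "{x, t} \<subseteq> A" by blast
    then have "{x, t} \<in> \<F>" using assms A(2) unfolding hereditary_def by blast
    moreover have "S = {x, t} - {x}" using A by auto
    ultimately have "S \<in> link \<F> x" unfolding link_def by blast
    then show "S \<in> {S \<in> link \<F> x. card S = 1}" using A(1) by simp
  qed
  then show ?thesis unfolding fcount_def by (simp add: card_image)
qed

lemma large_subsets_intersect:
  assumes "finite Q" "A \<subseteq> Q" "B \<subseteq> Q" "card Q < card A + card B"
  shows "A \<inter> B \<noteq> {}"
proof
  assume "A \<inter> B = {}"
  then have "card (A \<union> B) = card A + card B"
    using assms(1-3) finite_subset by (intro card_Un_disjoint) auto
  moreover have "card (A \<union> B) \<le> card Q" using assms(1-3) by (intro card_mono) auto
  ultimately show False using assms(4) by simp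
qed

lemma card_4sets_through_mini_weight:
  assumes "mini_weight \<F> x"
  shows "card {A \<in> \<F>. x \<in> A \<and> card A = 4} = 2"
  using assms fcount_Suc_eq_card_sets_through[of \<F> x 2]
  by (simp add: mini_weight_def numeral_eq_Suc)

lemma mini_weight_second_4set:
  assumes "hereditary \<F>" and "mini_weight \<F> x"
    and "Q \<in> \<F>" and "card Q = 4" and "x \<in> Q"
  obtains W where "W \<in> \<F>" "x \<in> W" "card W = 4" "W \<noteq> Q" "3 \<le> card (W \<inter> Q)"
proof -
  let ?T = "{A \<in> \<F>. x \<in> A \<and> card A = 4}"
  have "card ?T = 2" using card_4sets_through_mini_weight[OF assms(2)] .
  then have "\<not> ?T \<subseteq> {Q}" using card_mono[of "{Q}" ?T] by auto
  then obtain W where W: "W \<in> \<F>" "x \<in> W" "card W = 4" "W \<noteq> Q" by blast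
  have fin: "finite W" "finite Q" using W(3) assms(4) by (auto intro: card_ge_0_finite)
  have "card (nbhd \<F> x) = 4"
    using assms(2) fcount_one_eq_card_nbhd[OF assms(1)] by (simp add: mini_weight_def)
  moreover have "(W \<union> Q) - {x} \<subseteq> nbhd \<F> x"
    using W(1,2) assms(3,5) unfolding nbhd_def by blast
  ultimately have "card ((W \<union> Q) - {x}) \<le> 4"
    using card_mono[of "nbhd \<F> x"] card_ge_0_finite[of "nbhd \<F> x"] by simp
  then have "card (W \<union> Q) \<le> 5" using W(2) fin by (simp add: card_Diff_singleton)
  moreover have "card (W \<union> Q) + card (W \<inter> Q) = 8"
    using card_Un_Int[OF fin] W(3) assms(4) by simp
  ultimately have "3 \<le> card (W \<inter> Q)" by linarith
  with W show thesis using that by blast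
qed

theorem mainTheorem7:
  fixes V :: "'a set" and \<F> :: "'a set set" and Q :: "'a set"
  assumes "finite V"
    and "\<F> \<subseteq> Pow V"
    and "minimal_family V \<F>"
    and "Q \<in> \<F>" and "card Q = 4"
  shows "card {x \<in> Q. mini_weight \<F> x} \<le> 3"
proof (rule ccontr)
  assume many: "\<not> ?thesis"
  have her: "hereditary \<F>" using assms(3) unfolding minimal_family_def by simp
  have "finite Q" using assms(5) by (intro card_ge_0_finite) simp
  then have "{x \<in> Q. mini_weight \<F> x} = Q"
    using many assms(5) by (intro card_seteq) auto
  then have mw: "mini_weight \<F> x" if "x \<in> Q" for x using that by blast
  note second = mini_weight_second_4set[OF her mw assms(4,5)]
  obtain a where "a \<in> Q" using assms(5) by fastforce
  then obtain Wa where Wa: "Wa \<in> \<F>" "card Wa = 4" "Wa \<noteq> Q" "3 \<le> card (Wa \<inter> Q)"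
    using second by metis
  have "\<not> Q \<subseteq> Wa"
  proof
    assume "Q \<subseteq> Wa"
    moreover have "finite Wa" using Wa(2) by (intro card_ge_0_finite) simp
    ultimately have "Q = Wa" using Wa(2) assms(5) by (intro card_seteq) auto
    then show False using Wa(3) by simp
  qed
  then obtain c where "c \<in> Q" "c \<notin> Wa" by blast
  then obtain Wc where Wc: "Wc \<in> \<F>" "c \<in> Wc" "card Wc = 4" "Wc \<noteq> Q" "3 \<le> card (Wc \<inter> Q)"
    using second by metis
  have "(Wa \<inter> Q) \<inter> (Wc \<inter> Q) \<noteq> {}"
    using Wa(4) Wc(5) assms(5) by (intro large_subsets_intersect[OF \<open>finite Q\<close>]) auto
  then obtain p where p: "p \<in> Q" "p \<in> Wa" "p \<in> Wc" by blast
  have "Wa \<noteq> Wc" using Wc(2) \<open>c \<notin> Wa\<close> by blast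
  have "{Q, Wa, Wc} \<subseteq> {A \<in> \<F>. p \<in> A \<and> card A = 4}" using p Wa Wc assms(4,5) by auto
  moreover have "card {Q, Wa, Wc} = 3" using \<open>Wa \<noteq> Wc\<close> Wa(3) Wc(4) by simp
  moreover have "card {A \<in> \<F>. p \<in> A \<and> card A = 4} = 2"
    using card_4sets_through_mini_weight[OF mw[OF p(1)]] .
  ultimately show False
    using card_mono[of "{A \<in> \<F>. p \<in> A \<and> card A = 4}" "{Q, Wa, Wc}"] card_ge_0_finite by force
qed

end
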